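(* Let $M\subseteq Q_q^n$ ($n\ge 2$) be an MDS code with $\overline{0}\in M$, and let $G$ be a subgroup of $\mathrm{Ist}(M)$ acting transitively on $M$ such that for all $\overline\tau=(\tau_1,\dots,\tau_n),\overline\pi=(\pi_1,\dots,\pi_n)\in G$, the equality $\overline\tau(\overline{0})=\overline\pi(\overline{0})$ implies $\tau_1=\pi_1$. Then $G$ acts regularly on $M$ (in particular $|G|=|M|$), so $M$ is topolinear with regular group $G$.
   Context: $Q_q$ is a finite set of size $q$ containing $0$; $Q_q^n$ is the Hamming space of $n$-tuples, $\overline 0$ the all-zero tuple. An MDS code (with code distance 2) of length $n$ is a set $M\subseteq Q_q^n$ with $|M|=q^{n-1}$ and any two distinct elements at Hamming distance at least 2. An isotopism is a map $\overline{x}\mapsto(\tau_1x_1,\dots,\tau_nx_n)$ with $\tau_i$ permutations of $Q_q$; $\mathrm{Ist}(M)$ is the group of isotopisms mapping $M$ onto $M$. $M$ is topolinear if $\mathrm{Ist}(M)$ contains a subgroup of cardinality $|M|$ acting transitively on $M$. *)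

theory Defs
  imports "HOL-Combinatorics.Permutations"
begin

text \<open>Alphabet: a finite set Q (of size q = card Q) containing the element 0 of a type with zero.
 Words of length n: extensional functions on {0..<n} with values in Q.\<close>

definition hspace :: "'a set \<Rightarrow> nat \<Rightarrow> (nat \<Rightarrow> 'a) set" where
  "hspace Q n = PiE {0..<n} (\<lambda>_. Q)"

definition hdist :: "nat \<Rightarrow> (nat \<Rightarrow> 'a) \<Rightarrow> (nat \<Rightarrow> 'a) \<Rightarrow> nat" where
  "hdist n x y = card {i. i < n \<and> x i \<noteq> y i}"

definition zero_word :: "nat \<Rightarrow> (nat \<Rightarrow> 'a::zero)" where
  "zero_word n = (\<lambda>i. if i < n then 0 else undefined)"

definition MDS_code :: "'a set \<Rightarrow> nat \<Rightarrow> (nat \<Rightarrow> 'a) set \<Rightarrow> bool" where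
  "MDS_code Q n M \<longleftrightarrow> M \<subseteq> hspace Q n \<and> card M = card Q ^ (n - 1) \<and>
     (\<forall>x\<in>M. \<forall>y\<in>M. x \<noteq> y \<longrightarrow> hdist n x y \<ge> 2)"

text \<open>An isotopism is a tuple of permutations of Q, represented as nat => 'a => 'a with
 the identity in coordinates >= n (canonical representation).\<close>

definition isotopism :: "'a set \<Rightarrow> nat \<Rightarrow> (nat \<Rightarrow> 'a \<Rightarrow> 'a) \<Rightarrow> bool" where
  "isotopism Q n t \<longleftrightarrow> (\<forall>i<n. t i permutes Q) \<and> (\<forall>i\<ge>n. t i = id)"

definition ist_apply :: "(nat \<Rightarrow> 'a \<Rightarrow> 'a) \<Rightarrow> (nat \<Rightarrow> 'a) \<Rightarrow> (nat \<Rightarrow> 'a)" where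
  "ist_apply t x = (\<lambda>i. t i (x i))"

definition ist_comp :: "(nat \<Rightarrow> 'a \<Rightarrow> 'a) \<Rightarrow> (nat \<Rightarrow> 'a \<Rightarrow> 'a) \<Rightarrow> (nat \<Rightarrow> 'a \<Rightarrow> 'a)" where
  "ist_comp t p = (\<lambda>i. t i \<circ> p i)"

definition ist_inv :: "(nat \<Rightarrow> 'a \<Rightarrow> 'a) \<Rightarrow> (nat \<Rightarrow> 'a \<Rightarrow> 'a)" where
  "ist_inv t = (\<lambda>i. inv (t i))"

definition ist_id :: "nat \<Rightarrow> 'a \<Rightarrow> 'a" where
  "ist_id = (\<lambda>i. id)"

definition Ist :: "'a set \<Rightarrow> nat \<Rightarrow> (nat \<Rightarrow> 'a) set \<Rightarrow> (nat \<Rightarrow> 'a \<Rightarrow> 'a) set" where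
  "Ist Q n M = {t. isotopism Q n t \<and> ist_apply t ` M = M}"

definition ist_subgroup :: "'a set \<Rightarrow> nat \<Rightarrow> (nat \<Rightarrow> 'a) set \<Rightarrow> (nat \<Rightarrow> 'a \<Rightarrow> 'a) set \<Rightarrow> bool" where
  "ist_subgroup Q n M G \<longleftrightarrow> G \<subseteq> Ist Q n M \<and> ist_id \<in> G \<and>
     (\<forall>t\<in>G. \<forall>p\<in>G. ist_comp t p \<in> G) \<and> (\<forall>t\<in>G. ist_inv t \<in> G)"

definition acts_transitively :: "(nat \<Rightarrow> 'a \<Rightarrow> 'a) set \<Rightarrow> (nat \<Rightarrow> 'a) set \<Rightarrow> bool" where
  "acts_transitively G M \<longleftrightarrow> (\<forall>x\<in>M. \<forall>y\<in>M. \<exists>g\<in>G. ist_apply g x = y)"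

definition acts_regularly :: "(nat \<Rightarrow> 'a \<Rightarrow> 'a) set \<Rightarrow> (nat \<Rightarrow> 'a) set \<Rightarrow> bool" where
  "acts_regularly G M \<longleftrightarrow> (\<forall>x\<in>M. \<forall>y\<in>M. \<exists>!g. g \<in> G \<and> ist_apply g x = y)"

definition topolinear :: "'a set \<Rightarrow> nat \<Rightarrow> (nat \<Rightarrow> 'a) set \<Rightarrow> bool" where
  "topolinear Q n M \<longleftrightarrow> (\<exists>H. ist_subgroup Q n M H \<and> card H = card M \<and> acts_transitively H M)"

end

theory Submission
  imports Defs
begin

text \<open>Since M has q^(n-1) words and any two of them differ in at least two coordinates, deleting
  one coordinate maps M bijectively onto Q^(n-1). An isotopism of M that fixes the zero word
  and acts trivially on coordinate k therefore fixes, for every i and a, the codeword that is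
  a at i and 0 outside {i, k}, i.e. it is the identity. Applied to h\<inverse>g for g, h that
  agree on the zero word, the hypothesis on first coordinates makes the orbit map of the zero word injective on G,
  and a transitive group with an injective orbit map acts regularly.\<close>

lemma isotopism_bij: "isotopism Q n t \<Longrightarrow> bij (t i)"
  unfolding isotopism_def by (cases "i < n") (auto dest: permutes_bij)

lemma ist_apply_comp: "ist_apply (ist_comp t p) x = ist_apply t (ist_apply p x)"
  by (simp add: ist_apply_def ist_comp_def)

lemma ist_apply_inv: "isotopism Q n t \<Longrightarrow> ist_apply (ist_inv t) (ist_apply t x) = x"
  by (simp add: ist_apply_def ist_inv_def isotopism_bij bij_is_inj)

lemma ist_comp_inv_eq_id_imp_eq:
  assumes "isotopism Q n h" and "ist_comp (ist_inv h) g = ist_id"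
  shows "g = h"
proof (rule ext)
  fix i
  have "inv (h i) \<circ> g i = id"
    using fun_cong[OF assms(2), of i] by (simp add: ist_comp_def ist_inv_def ist_id_def)
  then have "h i \<circ> (inv (h i) \<circ> g i) = h i" by simp
  then show "g i = h i"
    using isotopism_bij[OF assms(1)] by (metis o_assoc bij_is_surj surj_iff id_o)
qed

lemma ist_comp_right_cancel:
  assumes "isotopism Q n k" and "ist_comp g k = ist_comp h k"
  shows "g = h"
proof (rule ext)
  fix i
  have "g i \<circ> k i = h i \<circ> k i" using fun_cong[OF assms(2), of i] by (simp add: ist_comp_def)
  then show "g i = h i"
    using isotopism_bij[OF assms(1)] by (metis bij_is_surj surj_fun_eq)
qed

lemma MDS_code_eq_if_agree_off:
  assumes "MDS_code Q n M" "x \<in> M" "y \<in> M" "\<And>j. j < n \<Longrightarrow> j \<noteq> i \<Longrightarrow> x j = y j"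
  shows "x = y"
proof (rule ccontr)
  assume "x \<noteq> y"
  then have "hdist n x y \<ge> 2" using assms(1-3) unfolding MDS_code_def by blast
  moreover have "{j. j < n \<and> x j \<noteq> y j} \<subseteq> {i}" using assms(4) by blast
  then have "card {j. j < n \<and> x j \<noteq> y j} \<le> 1" using card_mono[of "{i}"] by simp
  ultimately show False unfolding hdist_def by simp
qed

lemma MDS_code_puncture_onto:
  assumes "MDS_code Q n M" "finite Q" "k < n"
  shows "(\<lambda>x. restrict x ({0..<n} - {k})) ` M = PiE ({0..<n} - {k}) (\<lambda>_. Q)"
proof -
  let ?K = "{0..<n} - {k}"
  let ?f = "\<lambda>x. restrict x ?K"
  have "inj_on ?f M"
  proof (rule inj_onI)
    fix x y assume xy: "x \<in> M" "y \<in> M" and eq: "?f x = ?f y"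
    have "x j = y j" if "j < n" "j \<noteq> k" for j
      using fun_cong[OF eq, of j] that by simp
    with xy show "x = y" by (rule MDS_code_eq_if_agree_off[OF assms(1)])
  qed
  then have "card (?f ` M) = card (PiE ?K (\<lambda>_. Q))"
    using assms(1,3) unfolding MDS_code_def by (simp add: card_image card_PiE)
  moreover have "?f ` M \<subseteq> PiE ?K (\<lambda>_. Q)"
  proof (rule image_subsetI)
    fix x assume "x \<in> M"
    then have "x \<in> PiE {0..<n} (\<lambda>_. Q)" using assms(1) by (auto simp: MDS_code_def hspace_def)
    then show "?f x \<in> PiE ?K (\<lambda>_. Q)" by (simp add: Pi_iff PiE_iff)
  qed
  ultimately show ?thesis using assms(2) by (intro card_subset_eq) (auto simp: finite_PiE)
qed

lemma Ist_fixing_zero_word_coordinate: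
  fixes Q :: "'a::zero set"
  assumes "finite Q" "0 \<in> Q" "MDS_code Q n M" "s \<in> Ist Q n M"
    and fix0: "ist_apply s (zero_word n) = zero_word n"
    and "k < n" "s k = id" "i < n" "i \<noteq> k" "a \<in> Q"
  shows "s i a = a"
proof -
  let ?K = "{0..<n} - {k}"
  let ?w = "restrict (\<lambda>j. if j = i then a else 0) ?K"
  have "?w \<in> PiE ?K (\<lambda>_. Q)" using assms(2,10) by (simp add: Pi_iff)
  then have "?w \<in> (\<lambda>x. restrict x ?K) ` M" using MDS_code_puncture_onto[OF assms(3,1,6)] by simp
  then obtain x where x: "x \<in> M" "?w = restrict x ?K" by (rule imageE)
  have xj: "x j = (if j = i then a else 0)" if "j < n" "j \<noteq> k" for j
    using fun_cong[OF x(2), of j] that by simp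
  have s0: "s j 0 = 0" if "j < n" for j
    using fun_cong[OF fix0, of j] that by (simp add: ist_apply_def zero_word_def)
  have "ist_apply s x \<in> M" using assms(4) x(1) unfolding Ist_def by blast
  moreover have "x j = ist_apply s x j" if "j < n" "j \<noteq> i" for j
  proof (cases "j = k")
    case True
    then show ?thesis using \<open>s k = id\<close> by (simp add: ist_apply_def)
  next
    case False
    then show ?thesis using xj[OF that(1) False] s0[OF that(1)] that(2) by (simp add: ist_apply_def)
  qed
  ultimately have "x = ist_apply s x" by (rule MDS_code_eq_if_agree_off[OF assms(3) x(1)])
  then have "x i = s i (x i)" unfolding ist_apply_def by (rule fun_cong)
  then show ?thesis using xj assms(8,9) by simp
qed

lemma Ist_fixing_zero_word_eq_id:
  fixes Q :: "'a::zero set"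
  assumes "finite Q" "0 \<in> Q" "MDS_code Q n M" "s \<in> Ist Q n M"
    and "ist_apply s (zero_word n) = zero_word n" and "k < n" "s k = id"
  shows "s = ist_id"
proof (intro ext)
  fix i a
  have iso: "isotopism Q n s" using assms(4) unfolding Ist_def by simp
  show "s i a = ist_id i a"
  proof (cases "i < n \<and> i \<noteq> k \<and> a \<in> Q")
    case True
    then show ?thesis
      using Ist_fixing_zero_word_coordinate[OF assms] by (simp add: ist_id_def)
  next
    case False
    then consider "n \<le> i" | "i = k" | "i < n" "a \<notin> Q" by fastforce
    then show ?thesis
    proof cases
      case 1
      then show ?thesis using iso by (simp add: isotopism_def ist_id_def)
    next
      case 2
      then show ?thesis using \<open>s k = id\<close> by (simp add: ist_id_def)
    next
      case 3
      then have "s i permutes Q" using iso by (simp add: isotopism_def)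
      then show ?thesis using \<open>a \<notin> Q\<close> by (simp add: permutes_not_in ist_id_def)
    qed
  qed
qed

lemma ist_subgroup_orbit_zero_inj:
  fixes Q :: "'a::zero set"
  assumes "finite Q" "0 \<in> Q" "0 < n" "MDS_code Q n M" "ist_subgroup Q n M G"
    and first: "\<forall>t\<in>G. \<forall>p\<in>G. ist_apply t (zero_word n) = ist_apply p (zero_word n) \<longrightarrow> t 0 = p 0"
  shows "inj_on (\<lambda>g. ist_apply g (zero_word n)) G"
proof (rule inj_onI)
  fix g h assume g: "g \<in> G" and h: "h \<in> G"
    and eq: "ist_apply g (zero_word n) = ist_apply h (zero_word n)"
  have sub: "G \<subseteq> Ist Q n M" using assms(5) unfolding ist_subgroup_def by simp
  then have iso_h: "isotopism Q n h" using h unfolding Ist_def by blast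
  let ?s = "ist_comp (ist_inv h) g"
  have "?s \<in> G" using assms(5) g h unfolding ist_subgroup_def by simp
  then have s_Ist: "?s \<in> Ist Q n M" using sub by blast
  have s_fix: "ist_apply ?s (zero_word n) = zero_word n"
    by (simp only: ist_apply_comp eq ist_apply_inv[OF iso_h])
  have "g 0 = h 0" using first g h eq by blast
  then have s0: "?s 0 = id"
    using isotopism_bij[OF iso_h] by (simp add: ist_comp_def ist_inv_def bij_is_inj)
  have "?s = ist_id"
    by (rule Ist_fixing_zero_word_eq_id[OF assms(1,2,4) s_Ist s_fix assms(3) s0])
  then show "g = h" by (rule ist_comp_inv_eq_id_imp_eq[OF iso_h])
qed

lemma ist_subgroup_orbit_eq:
  assumes "ist_subgroup Q n M G" "acts_transitively G M" "x \<in> M"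
  shows "(\<lambda>g. ist_apply g x) ` G = M"
proof
  show "(\<lambda>g. ist_apply g x) ` G \<subseteq> M"
    using assms(1,3) unfolding ist_subgroup_def Ist_def by blast
  show "M \<subseteq> (\<lambda>g. ist_apply g x) ` G"
    using assms(2,3) unfolding acts_transitively_def by (auto simp: image_iff) metis
qed

lemma ist_subgroup_regular_if_orbit_inj:
  assumes "ist_subgroup Q n M G" "acts_transitively G M"
    and "x\<^sub>0 \<in> M" "inj_on (\<lambda>g. ist_apply g x\<^sub>0) G"
  shows "acts_regularly G M"
  unfolding acts_regularly_def
proof (intro ballI ex_ex1I)
  fix x y assume "x \<in> M" "y \<in> M"
  then show "\<exists>g. g \<in> G \<and> ist_apply g x = y" using assms(2) unfolding acts_transitively_def by blast
  fix g h assume g: "g \<in> G \<and> ist_apply g x = y" and h: "h \<in> G \<and> ist_apply h x = y"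
  obtain k where k: "k \<in> G" "ist_apply k x\<^sub>0 = x"
    using assms(2,3) \<open>x \<in> M\<close> unfolding acts_transitively_def by blast
  have iso_k: "isotopism Q n k" using assms(1) k(1) unfolding ist_subgroup_def Ist_def by blast
  have "ist_apply (ist_comp g k) x\<^sub>0 = ist_apply (ist_comp h k) x\<^sub>0"
    using g h k(2) by (simp add: ist_apply_comp)
  moreover have "ist_comp g k \<in> G" "ist_comp h k \<in> G"
    using assms(1) g h k(1) unfolding ist_subgroup_def by blast+
  ultimately have "ist_comp g k = ist_comp h k" by (rule inj_onD[OF assms(4)])
  then show "g = h" by (rule ist_comp_right_cancel[OF iso_k])
qed

theorem proposition7:
  fixes Q :: "'a::zero set" and n :: nat and M :: "(nat \<Rightarrow> 'a) set"
    and G :: "(nat \<Rightarrow> 'a \<Rightarrow> 'a) set"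
  assumes "finite Q" and "0 \<in> Q" and "n \<ge> 2"
    and "MDS_code Q n M" and "zero_word n \<in> M"
    and "ist_subgroup Q n M G" and "acts_transitively G M"
    and "\<forall>t\<in>G. \<forall>p\<in>G. ist_apply t (zero_word n) = ist_apply p (zero_word n) \<longrightarrow> t 0 = p 0"
  shows "acts_regularly G M \<and> card G = card M \<and> topolinear Q n M"
proof -
  have inj: "inj_on (\<lambda>g. ist_apply g (zero_word n)) G"
    using ist_subgroup_orbit_zero_inj[OF assms(1,2) _ assms(4,6,8)] assms(3) by simp
  have card: "card G = card M"
    using card_image[OF inj] ist_subgroup_orbit_eq[OF assms(6,7,5)] by simp
  have "acts_regularly G M"
    using ist_subgroup_regular_if_orbit_inj[OF assms(6,7,5) inj] .
  moreover have "topolinear Q n M" unfolding topolinear_def using assms(6,7) card by blast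
  ultimately show ?thesis using card by simp
qed

end
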